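(* Let $\Omega\subseteq\mathbb{R}^d$ be compact and convex with non-empty interior, and let $p_0,p_1$ be Lebesgue densities supported on $\Omega$ that are continuous on $\Omega$ with $0<\underline{\mathfrak p}\le p_j\le\overline{\mathfrak p}$ on $\Omega$. Let $$\omega(\eta)=\sup_{z,z'\in\Omega,\|z-z'\|\le\eta}\max_{j=0,1}\Big|\frac{p_j(z)}{p_j(z')}-1\Big|$$ and suppose $\omega(\eta)\le L\eta$ for all $\eta>0$, for some $L\ge0$. Let $v$ be the velocity field ($v(t,z)$ given by the formula below for $t\in(0,1)$, $z\in\Omega^\circ$, and $v(0,z)=\mathbb{E}[X_1]-z$, $v(1,z)=z-\mathbb{E}[X_0]$). Then for every $\varepsilon>0$, all $t\in[0,1]$ and $h>0$ with $t+h\in[0,1]$, $$\sup_{z\in\Omega^{-\varepsilon}}\|v(t,z)-v(t+h,z)\|\le2\,\mathrm{diam}(\Omega)\Big(8L\,\mathrm{diam}(\Omega)+\frac{\overline{\mathfrak p}^2}{\underline{\mathfrak p}^2}\frac{4^{d+1}d\,\mathrm{diam}^2(\Omega)}{\varepsilon^2\bar t}\Big)h,$$ where $\bar t=\min\{t,1-t\}$.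
   Context: $v(t,z)=\frac{\int_{S_t(z)}\delta p_0(z-t\delta)p_1(z+(1-t)\delta)d\delta}{\int_{S_t(z)}p_0(z-t\delta)p_1(z+(1-t)\delta)d\delta}$ with $S_t(z)=\{\delta: z-t\delta\in\Omega,\ z+(1-t)\delta\in\Omega\}$; $X_0\sim p_0$, $X_1\sim p_1$. $\Omega^{-\varepsilon}=\{x: \mathcal{B}(x,\varepsilon)\subseteq\Omega\}$, where $\mathcal{B}(x,\varepsilon)$ is the closed Euclidean ball. The right-hand side is interpreted as $+\infty$ when $\bar t=0$. *)

theory Defs
  imports "HOL-Analysis.Analysis"
begin

definition Sset :: "'a::euclidean_space set \<Rightarrow> real \<Rightarrow> 'a \<Rightarrow> 'a set" where
  "Sset \<Omega> t z = {\<delta>. z - t *\<^sub>R \<delta> \<in> \<Omega> \<and> z + (1 - t) *\<^sub>R \<delta> \<in> \<Omega>}"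

definition vel :: "('a::euclidean_space \<Rightarrow> real) \<Rightarrow> ('a \<Rightarrow> real) \<Rightarrow> 'a set \<Rightarrow> real \<Rightarrow> 'a \<Rightarrow> 'a" where
  "vel p0 p1 \<Omega> t z =
     (if t = 0 then integral UNIV (\<lambda>x. p1 x *\<^sub>R x) - z
      else if t = 1 then z - integral UNIV (\<lambda>x. p0 x *\<^sub>R x)
      else (1 / integral (Sset \<Omega> t z) (\<lambda>\<delta>. p0 (z - t *\<^sub>R \<delta>) * p1 (z + (1 - t) *\<^sub>R \<delta>)))
             *\<^sub>R integral (Sset \<Omega> t z) (\<lambda>\<delta>. (p0 (z - t *\<^sub>R \<delta>) * p1 (z + (1 - t) *\<^sub>R \<delta>)) *\<^sub>R \<delta>))"

definition omega :: "('a::euclidean_space \<Rightarrow> real) \<Rightarrow> ('a \<Rightarrow> real) \<Rightarrow> 'a set \<Rightarrow> real \<Rightarrow> real" where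
  "omega p0 p1 \<Omega> \<eta> = Sup {max \<bar>p0 z / p0 z' - 1\<bar> \<bar>p1 z / p1 z' - 1\<bar> | z z'.
                             z \<in> \<Omega> \<and> z' \<in> \<Omega> \<and> norm (z - z') \<le> \<eta>}"

definition inner_set :: "'a::euclidean_space set \<Rightarrow> real \<Rightarrow> 'a set" where
  "inner_set \<Omega> \<epsilon> = {x. cball x \<epsilon> \<subseteq> \<Omega>}"

end

theory Submission
  imports Defs
begin

text \<open>
  Write \<open>w\<^sub>\<tau>(\<delta>) = p\<^sub>0(z - \<tau>\<delta>) p\<^sub>1(z + (1 - \<tau>)\<delta>)\<close>, which vanishes off \<open>S\<^sub>\<tau>(z)\<close>; then
  \<open>v(\<tau>, z) = N\<^sub>\<tau> / Z\<^sub>\<tau>\<close> with \<open>Z\<^sub>\<tau> = \<integral> w\<^sub>\<tau>\<close> and \<open>N\<^sub>\<tau> = \<integral> w\<^sub>\<tau>(\<delta>) \<delta>\<close>. As \<open>|\<delta>| \<le> diam \<Omega>\<close> on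
  \<open>S\<^sub>\<tau>(z)\<close>, we get \<open>|v| \<le> diam \<Omega>\<close> and \<open>|v(t, z) - v(s, z)| \<le> 2 diam \<Omega> \<integral> |w\<^sub>t - w\<^sub>s| / Z\<^sub>t\<close>.
  For \<open>s = t + h\<close>, on \<open>S\<^sub>t \<inter> S\<^sub>s\<close> both evaluation points move by \<open>h |\<delta>|\<close>, so the linear bound
  on \<open>\<omega>\<close> makes \<open>w\<^sub>s\<close> and \<open>w\<^sub>t\<close> agree up to the factor \<open>1 \<plusminus> 3 L h diam \<Omega>\<close>. By convexity the rest
  of \<open>S\<^sub>t \<union> S\<^sub>s\<close> lies in two shells \<open>S - c S\<close> with \<open>1 - c \<le> h / min t (1 - t)\<close>, of measure at most
  \<open>d (1 - c) |S|\<close> (Bernoulli); these are charged to \<open>Z\<^sub>t \<ge> p\<^sub>l\<^sup>2 |S\<^sub>t|\<close>, using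
  \<open>|S\<^sub>s| \<le> 2\<^sup>d |S\<^sub>t|\<close> when \<open>h \<le> (1 - t) / 2\<close>. Steps with
  \<open>h > (1 - t) / 2\<close> or \<open>L h diam \<Omega> > 1\<close> are already covered by \<open>|v| \<le> diam \<Omega>\<close>.
  The ball \<open>B(z, \<epsilon>) \<subseteq> \<Omega>\<close> is only needed to make \<open>Z\<^sub>\<tau>\<close> positive, and the estimate proved,
  \<open>2 diam \<Omega> (3 L diam \<Omega> + (p\<^sub>u / p\<^sub>l)\<^sup>2 d (1 + 2\<^sup>d) / min t (1 - t)) h\<close>, does not depend
  on \<open>\<epsilon>\<close>.
\<close>

lemma
  fixes g :: "'a::euclidean_space \<Rightarrow> 'b::euclidean_space"
  assumes "compact S" "continuous_on S g" "\<And>x. x \<notin> S \<Longrightarrow> g x = 0"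
  shows integrable_on_UNIV_if_vanishing: "g integrable_on UNIV"
    and integral_UNIV_if_vanishing: "integral UNIV g = integral S g"
proof -
  have g_eq: "g = (\<lambda>x. if x \<in> S then g x else 0)"
    using assms(3) by auto
  have "g integrable_on S"
    using assms(1,2)
    by (metis borel_integrable_compact set_borel_integral_eq_integral(1) set_integrable_def)
  then show "g integrable_on UNIV"
    by (subst g_eq) (simp add: integrable_restrict_UNIV)
  show "integral UNIV g = integral S g"
    by (subst g_eq) (simp add: integral_restrict_UNIV)
qed

lemma convex_shorter_step_mem:
  assumes "convex S" "z \<in> S" "z + a *\<^sub>R d \<in> S" "0 \<le> b" "b \<le> a"
  shows "z + b *\<^sub>R d \<in> S"
proof (cases "a = 0")
  case True
  then show ?thesis using assms by auto
next
  case False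
  define c where "c = b / a"
  have c: "0 \<le> c" "c \<le> 1"
    using assms False by (auto simp: c_def field_simps)
  have "(1 - c) *\<^sub>R z + c *\<^sub>R (z + a *\<^sub>R d) \<in> S"
    using assms(1-3) c by (intro convexD) auto
  moreover have "(1 - c) *\<^sub>R z + c *\<^sub>R (z + a *\<^sub>R d) = z + b *\<^sub>R d"
    using False by (simp add: c_def algebra_simps)
  ultimately show ?thesis by simp
qed

lemma abs_mult_diff_le_relative:
  fixes p q p' q' e :: real
  assumes "0 \<le> p" "0 \<le> q" "\<bar>p' - p\<bar> \<le> e * p" "\<bar>q' - q\<bar> \<le> e * q" "0 \<le> e" "e \<le> 1"
  shows "\<bar>p * q - p' * q'\<bar> \<le> 3 * e * (p * q)"
proof -
  have split: "p * q - p' * q' = p' * (q - q') + (p - p') * q"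
    by (simp add: algebra_simps)
  have "e * p \<le> p"
    using assms by (simp add: mult_left_le_one_le)
  then have "\<bar>p'\<bar> \<le> 2 * p"
    using assms(3) by linarith
  then have "\<bar>p'\<bar> * \<bar>q - q'\<bar> \<le> (2 * p) * (e * q)"
    using assms(4) by (intro mult_mono) (auto simp: abs_minus_commute)
  moreover have "\<bar>p - p'\<bar> * \<bar>q\<bar> \<le> (e * p) * q"
    using assms(2,3) by (intro mult_mono) (auto simp: abs_minus_commute)
  ultimately have "\<bar>p * q - p' * q'\<bar> \<le> (2 * p) * (e * q) + (e * p) * q"
    unfolding split using abs_triangle_ineq[of "p' * (q - q')" "(p - p') * q"]
    by (simp only: abs_mult)
  also have "\<dots> = 3 * e * (p * q)"
    by (simp add: algebra_simps)
  finally show ?thesis .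
qed

lemma norm_scaleR_inverse_diff_le:
  fixes x y :: "'a::real_normed_vector"
  assumes "0 < a" "0 < b" "\<bar>a - b\<bar> \<le> I" "norm (x - y) \<le> D * I" "norm y \<le> D * b"
  shows "norm ((1 / a) *\<^sub>R x - (1 / b) *\<^sub>R y) \<le> 2 * D * I / a"
proof -
  have split: "(1 / a) *\<^sub>R x - (1 / b) *\<^sub>R y = (1 / a) *\<^sub>R (x - y) + ((b - a) / (a * b)) *\<^sub>R y"
  proof -
    have "(b - a) / (a * b) = 1 / a - 1 / b"
      using assms(1,2) by (simp add: field_simps)
    then show ?thesis
      by (simp add: scaleR_diff_left scaleR_diff_right)
  qed
  have "norm ((1 / a) *\<^sub>R (x - y)) \<le> D * I / a"
    using assms by (simp add: divide_right_mono)
  moreover have "norm (((b - a) / (a * b)) *\<^sub>R y) \<le> D * I / a"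
  proof -
    have "norm (((b - a) / (a * b)) *\<^sub>R y) = (\<bar>a - b\<bar> / (a * b)) * norm y"
      using assms(1,2) by (simp add: abs_minus_commute)
    also have "\<dots> \<le> (I / (a * b)) * (D * b)"
      using assms by (intro mult_mono divide_right_mono) auto
    also have "\<dots> = D * I / a"
      using assms(2) by (simp add: field_simps)
    finally show ?thesis .
  qed
  ultimately have "norm ((1 / a) *\<^sub>R x - (1 / b) *\<^sub>R y) \<le> D * I / a + D * I / a"
    unfolding split by (intro norm_triangle_le) linarith
  then show ?thesis
    by simp
qed

lemma measure_Diff_scaleR_image_le:
  fixes S :: "'a::euclidean_space set" and c :: real
  assumes "compact S" "0 \<le> c" "(\<lambda>x. c *\<^sub>R x) ` S \<subseteq> S"
  shows "measure lebesgue (S - (\<lambda>x. c *\<^sub>R x) ` S) \<le> DIM('a) * (1 - c) * measure lebesgue S"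
proof -
  have "(\<lambda>x. c *\<^sub>R x) ` S \<in> lmeasurable"
    using assms(1) compact_scaling lmeasurable_compact by blast
  then have "measure lebesgue (S - (\<lambda>x. c *\<^sub>R x) ` S) = (1 - c ^ DIM('a)) * measure lebesgue S"
    using measurable_measure_Diff[OF lmeasurable_compact[OF assms(1)] _ assms(3)]
      measure_lebesgue_affine[of c 0 S] assms(2)
    by (simp add: algebra_simps)
  also have "\<dots> \<le> DIM('a) * (1 - c) * measure lebesgue S"
    using Bernoulli_inequality[of "c - 1" "DIM('a)"] assms(2)
    by (intro mult_right_mono) (auto simp: algebra_simps)
  finally show ?thesis .
qed

lemma
  fixes f g B :: "'a::euclidean_space \<Rightarrow> real"
  assumes f: "f integrable_on UNIV" "(\<lambda>x. f x *\<^sub>R x) integrable_on UNIV"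
    and g: "g integrable_on UNIV" "(\<lambda>x. g x *\<^sub>R x) integrable_on UNIV"
    and B: "B integrable_on UNIV"
    and pointwise: "\<And>x. \<bar>f x - g x\<bar> \<le> B x"
    and support: "\<And>x. f x \<noteq> g x \<Longrightarrow> norm x \<le> D" and "0 \<le> D"
  shows abs_integral_diff_le: "\<bar>integral UNIV f - integral UNIV g\<bar> \<le> integral UNIV B"
    and norm_moment_diff_le:
      "norm (integral UNIV (\<lambda>x. f x *\<^sub>R x) - integral UNIV (\<lambda>x. g x *\<^sub>R x)) \<le> D * integral UNIV B"
proof -
  show "\<bar>integral UNIV f - integral UNIV g\<bar> \<le> integral UNIV B"
    using integral_norm_bound_integral[OF integrable_diff[OF f(1) g(1)] B] pointwise f(1) g(1)
    by (simp add: integral_diff)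
  have "norm (f x *\<^sub>R x - g x *\<^sub>R x) \<le> D * B x" for x
  proof (cases "f x = g x")
    case False
    then have "\<bar>f x - g x\<bar> * norm x \<le> B x * D"
      using pointwise[of x] support[of x] by (intro mult_mono) auto
    then show ?thesis
      by (simp add: mult.commute flip: scaleR_diff_left)
  next
    case True
    then show ?thesis
      using pointwise[of x] \<open>0 \<le> D\<close> by simp
  qed
  then have "norm (integral UNIV (\<lambda>x. f x *\<^sub>R x - g x *\<^sub>R x)) \<le> integral UNIV (\<lambda>x. D * B x)"
    using integrable_cmul[OF B, of D] by (intro integral_norm_bound_integral integrable_diff f g) auto
  then show "norm (integral UNIV (\<lambda>x. f x *\<^sub>R x) - integral UNIV (\<lambda>x. g x *\<^sub>R x)) \<le> D * integral UNIV B"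
    using f(2) g(2) by (simp add: integral_diff)
qed

lemma norm_le_diameter_if_mem_Sset:
  assumes "bounded \<Omega>" "\<delta> \<in> Sset \<Omega> \<tau> z"
  shows "norm \<delta> \<le> diameter \<Omega>"
proof -
  have "dist (z + (1 - \<tau>) *\<^sub>R \<delta>) (z - \<tau> *\<^sub>R \<delta>) \<le> diameter \<Omega>"
    using assms by (intro diameter_bounded_bound) (auto simp: Sset_def)
  then show ?thesis
    by (simp add: dist_norm algebra_simps)
qed

lemma compact_Sset:
  assumes "compact \<Omega>"
  shows "compact (Sset \<Omega> \<tau> z)"
proof -
  have "Sset \<Omega> \<tau> z = (\<lambda>\<delta>. z - \<tau> *\<^sub>R \<delta>) -` \<Omega> \<inter> (\<lambda>\<delta>. z + (1 - \<tau>) *\<^sub>R \<delta>) -` \<Omega>"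
    by (auto simp: Sset_def)
  then have "closed (Sset \<Omega> \<tau> z)"
    using compact_imp_closed[OF assms]
    by (auto intro!: closed_Int continuous_closed_vimage continuous_intros)
  moreover have "Sset \<Omega> \<tau> z \<subseteq> cball 0 (diameter \<Omega>)"
    using norm_le_diameter_if_mem_Sset compact_imp_bounded[OF assms] by auto
  ultimately show ?thesis
    using bounded_cball bounded_subset compact_eq_bounded_closed by blast
qed

lemma cball_subset_Sset:
  assumes "cball z \<epsilon> \<subseteq> \<Omega>" "0 \<le> \<tau>" "\<tau> \<le> 1"
  shows "cball 0 \<epsilon> \<subseteq> Sset \<Omega> \<tau> z"
proof
  fix \<delta> :: 'a
  assume "\<delta> \<in> cball 0 \<epsilon>"
  then have "norm (\<tau> *\<^sub>R \<delta>) \<le> \<epsilon>" "norm ((1 - \<tau>) *\<^sub>R \<delta>) \<le> \<epsilon>"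
    using assms(2,3) mult_left_le_one_le[of "norm \<delta>" \<tau>] mult_left_le_one_le[of "norm \<delta>" "1 - \<tau>"]
    by auto
  then have "z - \<tau> *\<^sub>R \<delta> \<in> cball z \<epsilon>" "z + (1 - \<tau>) *\<^sub>R \<delta> \<in> cball z \<epsilon>"
    by (simp_all add: dist_norm)
  then show "\<delta> \<in> Sset \<Omega> \<tau> z"
    using assms(1) by (auto simp: Sset_def)
qed

lemma scaleR_image_Sset_subset:
  assumes "convex \<Omega>" "z \<in> \<Omega>" "0 \<le> c" "0 \<le> \<tau>'" "\<tau>' \<le> 1"
    and "c * \<tau>' \<le> \<tau>" "c * (1 - \<tau>') \<le> 1 - \<tau>"
  shows "(\<lambda>\<delta>. c *\<^sub>R \<delta>) ` Sset \<Omega> \<tau> z \<subseteq> Sset \<Omega> \<tau>' z"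
proof clarify
  fix \<delta>
  assume "\<delta> \<in> Sset \<Omega> \<tau> z"
  then have to_X0: "z + \<tau> *\<^sub>R (- \<delta>) \<in> \<Omega>" and to_X1: "z + (1 - \<tau>) *\<^sub>R \<delta> \<in> \<Omega>"
    by (auto simp: Sset_def)
  have "z + (c * \<tau>') *\<^sub>R (- \<delta>) \<in> \<Omega>"
    by (rule convex_shorter_step_mem[OF assms(1,2) to_X0]) (use assms in auto)
  moreover have "z + (c * (1 - \<tau>')) *\<^sub>R \<delta> \<in> \<Omega>"
    by (rule convex_shorter_step_mem[OF assms(1,2) to_X1]) (use assms in auto)
  ultimately show "c *\<^sub>R \<delta> \<in> Sset \<Omega> \<tau>' z"
    by (simp add: Sset_def algebra_simps)
qed

lemma Sset_contractions:
  assumes "convex \<Omega>" "z \<in> \<Omega>" "0 < t" "t < s" "s < 1"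
  shows "(\<lambda>\<delta>. (t / s) *\<^sub>R \<delta>) ` Sset \<Omega> t z \<subseteq> Sset \<Omega> s z"
    and "(\<lambda>\<delta>. (t / s) *\<^sub>R \<delta>) ` Sset \<Omega> t z \<subseteq> Sset \<Omega> t z"
    and "(\<lambda>\<delta>. ((1 - s) / (1 - t)) *\<^sub>R \<delta>) ` Sset \<Omega> s z \<subseteq> Sset \<Omega> t z"
    and "(\<lambda>\<delta>. ((1 - s) / (1 - t)) *\<^sub>R \<delta>) ` Sset \<Omega> s z \<subseteq> Sset \<Omega> s z"
proof -
  have le: "t / s \<le> 1" "(1 - s) / (1 - t) \<le> 1" "t / s * (1 - s) \<le> 1 - t" "(1 - s) / (1 - t) * t \<le> s"
    using assms(3-5) by (simp_all add: field_simps)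
  show "(\<lambda>\<delta>. (t / s) *\<^sub>R \<delta>) ` Sset \<Omega> t z \<subseteq> Sset \<Omega> s z"
    by (rule scaleR_image_Sset_subset[OF assms(1,2)]) (use assms(3-5) le in auto)
  show "(\<lambda>\<delta>. (t / s) *\<^sub>R \<delta>) ` Sset \<Omega> t z \<subseteq> Sset \<Omega> t z"
    by (rule scaleR_image_Sset_subset[OF assms(1,2)])
      (use assms(3-5) le mult_left_le_one_le[of t "t / s"] mult_left_le_one_le[of "1 - t" "t / s"] in auto)
  show "(\<lambda>\<delta>. ((1 - s) / (1 - t)) *\<^sub>R \<delta>) ` Sset \<Omega> s z \<subseteq> Sset \<Omega> t z"
    by (rule scaleR_image_Sset_subset[OF assms(1,2)]) (use assms(3-5) le in auto)
  show "(\<lambda>\<delta>. ((1 - s) / (1 - t)) *\<^sub>R \<delta>) ` Sset \<Omega> s z \<subseteq> Sset \<Omega> s z"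
    by (rule scaleR_image_Sset_subset[OF assms(1,2)])
      (use assms(3-5) le mult_left_le_one_le[of s "(1 - s) / (1 - t)"]
        mult_left_le_one_le[of "1 - s" "(1 - s) / (1 - t)"] in auto)
qed

lemma measure_Sset_le_two_power:
  fixes \<Omega> :: "'a::euclidean_space set"
  assumes "compact \<Omega>" "convex \<Omega>" "z \<in> \<Omega>" "0 < t" "t < s" "s < 1" "s - t \<le> (1 - t) / 2"
  shows "measure lebesgue (Sset \<Omega> s z) \<le> 2 ^ DIM('a) * measure lebesgue (Sset \<Omega> t z)"
proof -
  define \<beta> where "\<beta> = (1 - s) / (1 - t)"
  let ?n = "DIM('a)"
  have "1 / 2 \<le> \<beta>"
    using assms(5-7) by (simp add: \<beta>_def field_simps)
  then have "(1 / 2) ^ ?n * measure lebesgue (Sset \<Omega> s z) \<le> \<beta> ^ ?n * measure lebesgue (Sset \<Omega> s z)"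
    by (intro mult_right_mono power_mono) auto
  also have "\<dots> = measure lebesgue ((\<lambda>\<delta>. \<beta> *\<^sub>R \<delta>) ` Sset \<Omega> s z)"
    using measure_lebesgue_affine[of \<beta> 0 "Sset \<Omega> s z"] \<open>1 / 2 \<le> \<beta>\<close> by simp
  also have "\<dots> \<le> measure lebesgue (Sset \<Omega> t z)"
    unfolding \<beta>_def
    by (intro measure_mono_fmeasurable Sset_contractions(3) assms fmeasurableD lmeasurable_compact
        compact_scaling compact_Sset)
  finally show ?thesis
    by (simp add: power_one_over field_simps)
qed

lemma measure_Sset_shells_le:
  fixes \<Omega> :: "'a::euclidean_space set"
  assumes "compact \<Omega>" "convex \<Omega>" "z \<in> \<Omega>" "0 < t" "t < s" "s < 1" "s - t \<le> (1 - t) / 2"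
  shows "measure lebesgue (Sset \<Omega> t z - (\<lambda>\<delta>. (t / s) *\<^sub>R \<delta>) ` Sset \<Omega> t z)
           \<le> DIM('a) * ((s - t) / min t (1 - t)) * measure lebesgue (Sset \<Omega> t z)"
    and "measure lebesgue (Sset \<Omega> s z - (\<lambda>\<delta>. ((1 - s) / (1 - t)) *\<^sub>R \<delta>) ` Sset \<Omega> s z)
           \<le> DIM('a) * ((s - t) / min t (1 - t)) * 2 ^ DIM('a) * measure lebesgue (Sset \<Omega> t z)"
proof -
  let ?n = "DIM('a)" and ?c = "DIM('a) * ((s - t) / min t (1 - t))"
  note contractions = Sset_contractions[OF assms(2-6)]
  have compact: "compact (Sset \<Omega> \<tau> z)" for \<tau>
    using compact_Sset[OF assms(1)] .
  have "1 - t / s = (s - t) / s" "1 - (1 - s) / (1 - t) = (s - t) / (1 - t)"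
    using assms(4-6) by (simp_all add: field_simps)
  moreover have "(s - t) / s \<le> (s - t) / min t (1 - t)" "(s - t) / (1 - t) \<le> (s - t) / min t (1 - t)"
    using assms(4-6) by (auto intro!: divide_left_mono)
  ultimately have le_t: "?n * (1 - t / s) \<le> ?c" and le_s: "?n * (1 - (1 - s) / (1 - t)) \<le> ?c"
    by (metis mult_left_mono of_nat_0_le_iff)+
  have "0 \<le> t / s" "0 \<le> (1 - s) / (1 - t)" "0 \<le> ?c"
    using assms(4-6) by simp_all
  have "measure lebesgue (Sset \<Omega> t z - (\<lambda>\<delta>. (t / s) *\<^sub>R \<delta>) ` Sset \<Omega> t z)
      \<le> ?n * (1 - t / s) * measure lebesgue (Sset \<Omega> t z)"
    using measure_Diff_scaleR_image_le[OF compact \<open>0 \<le> t / s\<close> contractions(2)] .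
  also have "\<dots> \<le> ?c * measure lebesgue (Sset \<Omega> t z)"
    using le_t by (rule mult_right_mono) simp
  finally show "measure lebesgue (Sset \<Omega> t z - (\<lambda>\<delta>. (t / s) *\<^sub>R \<delta>) ` Sset \<Omega> t z)
      \<le> ?c * measure lebesgue (Sset \<Omega> t z)" .
  have "measure lebesgue (Sset \<Omega> s z - (\<lambda>\<delta>. ((1 - s) / (1 - t)) *\<^sub>R \<delta>) ` Sset \<Omega> s z)
      \<le> ?n * (1 - (1 - s) / (1 - t)) * measure lebesgue (Sset \<Omega> s z)"
    using measure_Diff_scaleR_image_le[OF compact \<open>0 \<le> (1 - s) / (1 - t)\<close> contractions(4)] .
  also have "\<dots> \<le> ?c * (2 ^ ?n * measure lebesgue (Sset \<Omega> t z))"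
    using le_s measure_Sset_le_two_power[OF assms] \<open>0 \<le> ?c\<close> by (rule mult_mono) simp
  finally show "measure lebesgue (Sset \<Omega> s z - (\<lambda>\<delta>. ((1 - s) / (1 - t)) *\<^sub>R \<delta>) ` Sset \<Omega> s z)
      \<le> ?c * 2 ^ ?n * measure lebesgue (Sset \<Omega> t z)"
    by (simp only: mult.assoc)
qed

locale bounded_densities =
  fixes \<Omega> :: "'a::euclidean_space set" and p0 p1 :: "'a \<Rightarrow> real" and pl pu :: real
  assumes compact_\<Omega>: "compact \<Omega>" and convex_\<Omega>: "convex \<Omega>"
    and p0_outside: "\<And>x. x \<notin> \<Omega> \<Longrightarrow> p0 x = 0" and p1_outside: "\<And>x. x \<notin> \<Omega> \<Longrightarrow> p1 x = 0"
    and p0_cont: "continuous_on \<Omega> p0" and p1_cont: "continuous_on \<Omega> p1"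
    and pl_pos: "0 < pl"
    and p0_bounds: "\<And>x. x \<in> \<Omega> \<Longrightarrow> pl \<le> p0 x \<and> p0 x \<le> pu"
    and p1_bounds: "\<And>x. x \<in> \<Omega> \<Longrightarrow> pl \<le> p1 x \<and> p1 x \<le> pu"
begin

text \<open>\<open>weight \<tau> z\<close> is the unnormalised conditional density of \<open>X\<^sub>1 - X\<^sub>0\<close> given
  \<open>(1 - \<tau>) X\<^sub>0 + \<tau> X\<^sub>1 = z\<close>.\<close>

definition weight :: "real \<Rightarrow> 'a \<Rightarrow> 'a \<Rightarrow> real" where
  "weight \<tau> z \<delta> = p0 (z - \<tau> *\<^sub>R \<delta>) * p1 (z + (1 - \<tau>) *\<^sub>R \<delta>)"

definition mass :: "real \<Rightarrow> 'a \<Rightarrow> real" where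
  "mass \<tau> z = integral UNIV (weight \<tau> z)"

definition moment :: "real \<Rightarrow> 'a \<Rightarrow> 'a" where
  "moment \<tau> z = integral UNIV (\<lambda>\<delta>. weight \<tau> z \<delta> *\<^sub>R \<delta>)"

lemma bounded_\<Omega>: "bounded \<Omega>"
  using compact_\<Omega> by (rule compact_imp_bounded)

lemma densities_nonneg: "0 \<le> p0 x" "0 \<le> p1 x"
  using p0_bounds[of x] p0_outside[of x] p1_bounds[of x] p1_outside[of x] pl_pos
  by (cases "x \<in> \<Omega>"; force)+

lemma weight_nonneg: "0 \<le> weight \<tau> z \<delta>"
  by (simp add: weight_def densities_nonneg)

lemma weight_eq_0: "\<delta> \<notin> Sset \<Omega> \<tau> z \<Longrightarrow> weight \<tau> z \<delta> = 0"
  by (auto simp: weight_def Sset_def p0_outside p1_outside)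

lemma weight_between:
  assumes "\<delta> \<in> Sset \<Omega> \<tau> z"
  shows "pl\<^sup>2 \<le> weight \<tau> z \<delta>" "weight \<tau> z \<delta> \<le> pu\<^sup>2"
proof -
  have "z - \<tau> *\<^sub>R \<delta> \<in> \<Omega>" "z + (1 - \<tau>) *\<^sub>R \<delta> \<in> \<Omega>"
    using assms by (auto simp: Sset_def)
  then have "pl \<le> p0 (z - \<tau> *\<^sub>R \<delta>)" "p0 (z - \<tau> *\<^sub>R \<delta>) \<le> pu"
    "pl \<le> p1 (z + (1 - \<tau>) *\<^sub>R \<delta>)" "p1 (z + (1 - \<tau>) *\<^sub>R \<delta>) \<le> pu"
    using p0_bounds p1_bounds by auto
  then show "pl\<^sup>2 \<le> weight \<tau> z \<delta>" "weight \<tau> z \<delta> \<le> pu\<^sup>2"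
    unfolding weight_def power2_eq_square using pl_pos by (auto intro!: mult_mono)
qed

lemma weight_le: "weight \<tau> z \<delta> \<le> pu\<^sup>2"
  by (cases "\<delta> \<in> Sset \<Omega> \<tau> z") (simp_all add: weight_between weight_eq_0)

lemma weight_continuous_on: "continuous_on (Sset \<Omega> \<tau> z) (weight \<tau> z)"
proof -
  have "continuous_on (Sset \<Omega> \<tau> z) (\<lambda>\<delta>. p0 (z - \<tau> *\<^sub>R \<delta>))"
    by (rule continuous_on_compose2[OF p0_cont]) (auto intro!: continuous_intros simp: Sset_def)
  moreover have "continuous_on (Sset \<Omega> \<tau> z) (\<lambda>\<delta>. p1 (z + (1 - \<tau>) *\<^sub>R \<delta>))"
    by (rule continuous_on_compose2[OF p1_cont]) (auto intro!: continuous_intros simp: Sset_def)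
  ultimately show ?thesis
    unfolding weight_def by (rule continuous_on_mult)
qed

lemma weight_integrable: "weight \<tau> z integrable_on UNIV"
  by (rule integrable_on_UNIV_if_vanishing[OF compact_Sset[OF compact_\<Omega>]
        weight_continuous_on weight_eq_0])

lemma weight_moment_integrable: "(\<lambda>\<delta>. weight \<tau> z \<delta> *\<^sub>R \<delta>) integrable_on UNIV"
  by (rule integrable_on_UNIV_if_vanishing[OF compact_Sset[OF compact_\<Omega>]])
    (auto intro!: continuous_intros weight_continuous_on simp: weight_eq_0)

lemma vel_eq_moment_over_mass:
  assumes "0 < \<tau>" "\<tau> < 1"
  shows "vel p0 p1 \<Omega> \<tau> z = (1 / mass \<tau> z) *\<^sub>R moment \<tau> z"
proof -
  have "mass \<tau> z = integral (Sset \<Omega> \<tau> z) (weight \<tau> z)"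
    unfolding mass_def
    by (rule integral_UNIV_if_vanishing[OF compact_Sset[OF compact_\<Omega>]
          weight_continuous_on weight_eq_0])
  moreover have "moment \<tau> z = integral (Sset \<Omega> \<tau> z) (\<lambda>\<delta>. weight \<tau> z \<delta> *\<^sub>R \<delta>)"
    unfolding moment_def
    by (rule integral_UNIV_if_vanishing[OF compact_Sset[OF compact_\<Omega>]])
      (auto intro!: continuous_intros weight_continuous_on simp: weight_eq_0)
  ultimately show ?thesis
    using assms by (simp add: vel_def flip: weight_def)
qed

lemma mass_ge_measure: "pl\<^sup>2 * measure lebesgue (Sset \<Omega> \<tau> z) \<le> mass \<tau> z"
proof -
  have S: "Sset \<Omega> \<tau> z \<in> lmeasurable"
    by (rule lmeasurable_compact[OF compact_Sset[OF compact_\<Omega>]])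
  have "pl\<^sup>2 * measure lebesgue (Sset \<Omega> \<tau> z) = integral UNIV (\<lambda>\<delta>. pl\<^sup>2 * indicator (Sset \<Omega> \<tau> z) \<delta>)"
    by (simp add: lmeasure_integral_UNIV[OF S])
  also have "\<dots> \<le> mass \<tau> z"
    unfolding mass_def
  proof (rule integral_le[OF _ weight_integrable])
    show "(\<lambda>\<delta>. pl\<^sup>2 * indicator (Sset \<Omega> \<tau> z) \<delta>) integrable_on UNIV"
      using S integrable_on_lebesgue lmeasurable_iff_integrable by (blast intro: integrable_cmul)
    show "pl\<^sup>2 * indicator (Sset \<Omega> \<tau> z) \<delta> \<le> weight \<tau> z \<delta>" for \<delta>
      using weight_between(1) weight_nonneg by (simp add: indicator_def)
  qed
  finally show ?thesis .
qed

lemma mass_pos: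
  assumes "0 < \<epsilon>" "cball z \<epsilon> \<subseteq> \<Omega>" "0 \<le> \<tau>" "\<tau> \<le> 1"
  shows "0 < mass \<tau> z"
proof -
  have "0 < measure lebesgue (cball (0::'a) \<epsilon>)"
    using assms(1) by (simp add: content_cball_pos)
  also have "\<dots> \<le> measure lebesgue (Sset \<Omega> \<tau> z)"
    by (intro measure_mono_fmeasurable cball_subset_Sset assms fmeasurableD lmeasurable_compact
        compact_Sset compact_\<Omega> compact_cball)
  finally show ?thesis
    using mass_ge_measure[of \<tau> z] pl_pos by (smt (verit) mult_pos_pos zero_less_power)
qed

lemma norm_moment_le: "norm (moment \<tau> z) \<le> diameter \<Omega> * mass \<tau> z"
proof -
  have "norm (weight \<tau> z \<delta> *\<^sub>R \<delta>) \<le> diameter \<Omega> * weight \<tau> z \<delta>" for \<delta>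
    using norm_le_diameter_if_mem_Sset[OF bounded_\<Omega>] weight_nonneg[of \<tau> z \<delta>] weight_eq_0[of \<delta> \<tau> z]
    by (cases "\<delta> \<in> Sset \<Omega> \<tau> z") (auto simp: mult.commute intro: mult_right_mono)
  moreover have "(\<lambda>\<delta>. diameter \<Omega> * weight \<tau> z \<delta>) integrable_on UNIV"
    using integrable_cmul[OF weight_integrable, of "diameter \<Omega>" \<tau> z] by simp
  ultimately have "norm (moment \<tau> z) \<le> integral UNIV (\<lambda>\<delta>. diameter \<Omega> * weight \<tau> z \<delta>)"
    unfolding moment_def by (intro integral_norm_bound_integral weight_moment_integrable)
  then show ?thesis
    by (simp add: mass_def)
qed

lemma norm_vel_1_le_diameter:
  assumes "(p0 has_integral 1) UNIV" "z \<in> \<Omega>"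
  shows "norm (vel p0 p1 \<Omega> 1 z) \<le> diameter \<Omega>"
proof -
  have x_int: "(\<lambda>x. p0 x *\<^sub>R x) integrable_on UNIV"
    by (rule integrable_on_UNIV_if_vanishing[OF compact_\<Omega>])
      (auto intro!: continuous_intros p0_cont simp: p0_outside)
  have z_int: "((\<lambda>x. p0 x *\<^sub>R z) has_integral z) UNIV"
    using has_integral_scaleR_left[OF assms(1)] by simp
  have "norm (p0 x *\<^sub>R z - p0 x *\<^sub>R x) \<le> diameter \<Omega> * p0 x" for x
  proof (cases "x \<in> \<Omega>")
    case True
    then have "norm (z - x) \<le> diameter \<Omega>"
      using diameter_bounded_bound[OF bounded_\<Omega> assms(2)] by (simp add: dist_norm)
    then have "p0 x * norm (z - x) \<le> p0 x * diameter \<Omega>"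
      using densities_nonneg(1)[of x] by (rule mult_left_mono)
    then show ?thesis
      using densities_nonneg(1)[of x] by (simp add: mult.commute flip: scaleR_diff_right)
  qed (simp add: p0_outside)
  moreover have "(\<lambda>x. diameter \<Omega> * p0 x) integrable_on UNIV"
    using integrable_cmul[OF has_integral_integrable[OF assms(1)], of "diameter \<Omega>"] by simp
  ultimately have "norm (integral UNIV (\<lambda>x. p0 x *\<^sub>R z - p0 x *\<^sub>R x))
      \<le> integral UNIV (\<lambda>x. diameter \<Omega> * p0 x)"
    using z_int x_int by (intro integral_norm_bound_integral integrable_diff) auto
  moreover have "integral UNIV (\<lambda>x. p0 x *\<^sub>R z - p0 x *\<^sub>R x) = vel p0 p1 \<Omega> 1 z"
    using integral_diff[OF has_integral_integrable[OF z_int] x_int] integral_unique[OF z_int]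
    by (simp add: vel_def)
  ultimately show ?thesis
    using assms(1) by (simp add: integral_unique)
qed

lemma norm_vel_le_diameter:
  assumes "(p0 has_integral 1) UNIV" "z \<in> \<Omega>" "0 < \<tau>" "\<tau> \<le> 1"
  shows "norm (vel p0 p1 \<Omega> \<tau> z) \<le> diameter \<Omega>"
proof (cases "\<tau> = 1")
  case True
  then show ?thesis
    using norm_vel_1_le_diameter[OF assms(1,2)] by simp
next
  case False
  then have "vel p0 p1 \<Omega> \<tau> z = (1 / mass \<tau> z) *\<^sub>R moment \<tau> z"
    using assms(3,4) by (intro vel_eq_moment_over_mass) auto
  moreover have "0 \<le> mass \<tau> z"
    unfolding mass_def using weight_integrable weight_nonneg by (rule integral_nonneg)
  ultimately show ?thesis
    using norm_moment_le[of \<tau> z] diameter_ge_0[OF bounded_\<Omega>]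
    by (cases "mass \<tau> z = 0") (auto simp: field_simps)
qed

lemma ratio_le_omega:
  assumes "a \<in> \<Omega>" "b \<in> \<Omega>"
  shows "max \<bar>p0 a / p0 b - 1\<bar> \<bar>p1 a / p1 b - 1\<bar> \<le> omega p0 p1 \<Omega> (norm (a - b))"
proof -
  have ratio_le: "\<bar>q u / q u' - 1\<bar> \<le> pu / pl + 1"
    if q: "\<And>x. x \<in> \<Omega> \<Longrightarrow> pl \<le> q x \<and> q x \<le> pu" and "u \<in> \<Omega>" "u' \<in> \<Omega>" for q u u'
  proof -
    have "0 \<le> q u / q u'" "q u / q u' \<le> pu / pl"
      using q[OF \<open>u \<in> \<Omega>\<close>] q[OF \<open>u' \<in> \<Omega>\<close>] pl_pos by (auto intro: frac_le)
    then show ?thesis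
      by linarith
  qed
  have "bdd_above {max \<bar>p0 u / p0 u' - 1\<bar> \<bar>p1 u / p1 u' - 1\<bar> | u u'.
      u \<in> \<Omega> \<and> u' \<in> \<Omega> \<and> norm (u - u') \<le> norm (a - b)}"
    using ratio_le[OF p0_bounds] ratio_le[OF p1_bounds]
    by (intro bdd_aboveI[where M = "pu / pl + 1"]) force
  then show ?thesis
    unfolding omega_def using assms by (intro cSup_upper) auto
qed

lemma relative_lipschitz:
  assumes lip: "\<And>\<eta>. \<eta> > 0 \<Longrightarrow> omega p0 p1 \<Omega> \<eta> \<le> L * \<eta>" and "a \<in> \<Omega>" "b \<in> \<Omega>"
  shows "\<bar>p0 a - p0 b\<bar> \<le> L * norm (a - b) * p0 b"
    and "\<bar>p1 a - p1 b\<bar> \<le> L * norm (a - b) * p1 b"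
proof -
  have from_ratio: "\<bar>x - y\<bar> \<le> r * y" if "\<bar>x / y - 1\<bar> \<le> r" "pl \<le> y" for x y r
  proof -
    have "x - y = (x / y - 1) * y"
      using that(2) pl_pos by (simp add: field_simps)
    then have "\<bar>x - y\<bar> = \<bar>x / y - 1\<bar> * y"
      using that(2) pl_pos by (simp add: abs_mult)
    then show ?thesis
      using that pl_pos by (simp add: mult_right_mono)
  qed
  have "max \<bar>p0 a / p0 b - 1\<bar> \<bar>p1 a / p1 b - 1\<bar> \<le> L * norm (a - b)"
  proof (cases "a = b")
    case False
    then show ?thesis
      using ratio_le_omega[OF assms(2,3)] lip[of "norm (a - b)"] by simp
  next
    case True
    have "0 < p0 b" "0 < p1 b"
      using assms(3) p0_bounds p1_bounds pl_pos by (auto intro: less_le_trans)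
    then show ?thesis
      using True by simp
  qed
  then show "\<bar>p0 a - p0 b\<bar> \<le> L * norm (a - b) * p0 b" "\<bar>p1 a - p1 b\<bar> \<le> L * norm (a - b) * p1 b"
    using from_ratio p0_bounds[OF assms(3)] p1_bounds[OF assms(3)] by auto
qed

lemma weight_diff_le_relative:
  assumes lip: "\<And>\<eta>. \<eta> > 0 \<Longrightarrow> omega p0 p1 \<Omega> \<eta> \<le> L * \<eta>" and "0 \<le> L"
    and t: "\<delta> \<in> Sset \<Omega> t z" and s: "\<delta> \<in> Sset \<Omega> s z"
    and "t \<le> s" "L * (s - t) * diameter \<Omega> \<le> 1"
  shows "\<bar>weight t z \<delta> - weight s z \<delta>\<bar> \<le> 3 * (L * (s - t) * diameter \<Omega>) * weight t z \<delta>"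
proof -
  define e where "e = L * (s - t) * diameter \<Omega>"
  have e: "0 \<le> e" "e \<le> 1"
    using assms(2,5,6) diameter_ge_0[OF bounded_\<Omega>] by (auto simp: e_def)
  have "L * ((s - t) * norm \<delta>) \<le> e"
    using norm_le_diameter_if_mem_Sset[OF bounded_\<Omega> t] assms(2,5)
    unfolding e_def mult.assoc by (intro mult_left_mono) auto
  moreover have "norm ((z - s *\<^sub>R \<delta>) - (z - t *\<^sub>R \<delta>)) = (s - t) * norm \<delta>"
    and "norm ((z + (1 - s) *\<^sub>R \<delta>) - (z + (1 - t) *\<^sub>R \<delta>)) = (s - t) * norm \<delta>"
    using assms(5) by (simp_all add: algebra_simps flip: scaleR_diff_left)
  moreover have "z - t *\<^sub>R \<delta> \<in> \<Omega>" "z + (1 - t) *\<^sub>R \<delta> \<in> \<Omega>"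
    and "z - s *\<^sub>R \<delta> \<in> \<Omega>" "z + (1 - s) *\<^sub>R \<delta> \<in> \<Omega>"
    using t s by (auto simp: Sset_def)
  ultimately have "\<bar>p0 (z - s *\<^sub>R \<delta>) - p0 (z - t *\<^sub>R \<delta>)\<bar> \<le> e * p0 (z - t *\<^sub>R \<delta>)"
    and "\<bar>p1 (z + (1 - s) *\<^sub>R \<delta>) - p1 (z + (1 - t) *\<^sub>R \<delta>)\<bar> \<le> e * p1 (z + (1 - t) *\<^sub>R \<delta>)"
    using relative_lipschitz[OF lip] densities_nonneg
    by (metis mult_right_mono order_trans)+
  then show ?thesis
    unfolding weight_def e_def[symmetric]
    by (intro abs_mult_diff_le_relative densities_nonneg e)
qed

definition weight_diff_bound :: "real \<Rightarrow> real \<Rightarrow> real \<Rightarrow> 'a \<Rightarrow> 'a \<Rightarrow> real" where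
  "weight_diff_bound e t s z \<delta> = 3 * e * weight t z \<delta>
    + pu\<^sup>2 * indicator (Sset \<Omega> t z - (\<lambda>\<delta>. (t / s) *\<^sub>R \<delta>) ` Sset \<Omega> t z) \<delta>
    + pu\<^sup>2 * indicator (Sset \<Omega> s z - (\<lambda>\<delta>. ((1 - s) / (1 - t)) *\<^sub>R \<delta>) ` Sset \<Omega> s z) \<delta>"

lemma weight_diff_le:
  assumes lip: "\<And>\<eta>. \<eta> > 0 \<Longrightarrow> omega p0 p1 \<Omega> \<eta> \<le> L * \<eta>" and "0 \<le> L"
    and "z \<in> \<Omega>" "0 < t" "t < s" "s < 1" "L * (s - t) * diameter \<Omega> \<le> 1"
  shows "\<bar>weight t z \<delta> - weight s z \<delta>\<bar> \<le> weight_diff_bound (L * (s - t) * diameter \<Omega>) t s z \<delta>"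
proof -
  let ?rel = "3 * (L * (s - t) * diameter \<Omega>) * weight t z \<delta>"
    and ?shell_t = "pu\<^sup>2 * indicator (Sset \<Omega> t z - (\<lambda>\<delta>. (t / s) *\<^sub>R \<delta>) ` Sset \<Omega> t z) \<delta>"
    and ?shell_s = "pu\<^sup>2 * indicator (Sset \<Omega> s z - (\<lambda>\<delta>. ((1 - s) / (1 - t)) *\<^sub>R \<delta>) ` Sset \<Omega> s z) \<delta>"
  note contractions = Sset_contractions[OF convex_\<Omega> assms(3-6)]
  have nonneg: "0 \<le> ?rel" "0 \<le> ?shell_t" "0 \<le> ?shell_s"
    using assms(2,5) diameter_ge_0[OF bounded_\<Omega>] weight_nonneg by auto
  consider (both) "\<delta> \<in> Sset \<Omega> t z" "\<delta> \<in> Sset \<Omega> s z" | (only_t) "\<delta> \<in> Sset \<Omega> t z - Sset \<Omega> s z"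
    | (only_s) "\<delta> \<in> Sset \<Omega> s z - Sset \<Omega> t z" | (neither) "\<delta> \<notin> Sset \<Omega> t z" "\<delta> \<notin> Sset \<Omega> s z"
    by blast
  then have "\<bar>weight t z \<delta> - weight s z \<delta>\<bar> \<le> ?rel + ?shell_t + ?shell_s"
  proof cases
    case both
    then show ?thesis
      using weight_diff_le_relative[OF lip assms(2) both] assms(5,7) nonneg by linarith
  next
    case only_t
    then have "\<delta> \<notin> (\<lambda>\<delta>. (t / s) *\<^sub>R \<delta>) ` Sset \<Omega> t z"
      using contractions(1) by blast
    then have "\<bar>weight t z \<delta> - weight s z \<delta>\<bar> = weight t z \<delta>" "?shell_t = pu\<^sup>2"
      using only_t weight_eq_0 weight_nonneg by auto
    then show ?thesis
      using weight_le[of t z \<delta>] nonneg by linarith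
  next
    case only_s
    then have "\<delta> \<notin> (\<lambda>\<delta>. ((1 - s) / (1 - t)) *\<^sub>R \<delta>) ` Sset \<Omega> s z"
      using contractions(3) by blast
    then have "\<bar>weight t z \<delta> - weight s z \<delta>\<bar> = weight s z \<delta>" "?shell_s = pu\<^sup>2"
      using only_s weight_eq_0 weight_nonneg by auto
    then show ?thesis
      using weight_le[of s z \<delta>] nonneg by linarith
  qed (use nonneg in \<open>simp add: weight_eq_0\<close>)
  then show ?thesis
    by (simp add: weight_diff_bound_def)
qed

lemma weight_diff_bound_integral_le:
  assumes "z \<in> \<Omega>" "0 < t" "t < s" "s < 1" "s - t \<le> (1 - t) / 2"
  shows "weight_diff_bound e t s z integrable_on UNIV"
    and "integral UNIV (weight_diff_bound e t s z) \<le> (3 * e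
      + (pu\<^sup>2 / pl\<^sup>2) * DIM('a) * (1 + 2 ^ DIM('a)) * (s - t) / min t (1 - t)) * mass t z"
proof -
  let ?n = "DIM('a)" and ?S = "measure lebesgue (Sset \<Omega> t z)"
  define A where "A = Sset \<Omega> t z - (\<lambda>\<delta>. (t / s) *\<^sub>R \<delta>) ` Sset \<Omega> t z"
  define A' where "A' = Sset \<Omega> s z - (\<lambda>\<delta>. ((1 - s) / (1 - t)) *\<^sub>R \<delta>) ` Sset \<Omega> s z"
  define c where "c = ?n * ((s - t) / min t (1 - t))"
  have "A \<in> lmeasurable" "A' \<in> lmeasurable"
    unfolding A_def A'_def
    by (intro fmeasurable_Diff fmeasurableD lmeasurable_compact compact_scaling compact_Sset compact_\<Omega>)+
  then have integral: "(weight_diff_bound e t s z has_integral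
      3 * e * mass t z + pu\<^sup>2 * measure lebesgue A + pu\<^sup>2 * measure lebesgue A') UNIV"
    unfolding weight_diff_bound_def[abs_def] mass_def A_def[symmetric] A'_def[symmetric]
    by (intro has_integral_add has_integral_mult_right integrable_integral weight_integrable)
      (simp_all add: lmeasurable_iff_has_integral)
  then show "weight_diff_bound e t s z integrable_on UNIV"
    by blast
  have "pu\<^sup>2 * measure lebesgue A + pu\<^sup>2 * measure lebesgue A' \<le> pu\<^sup>2 * (c * ?S) + pu\<^sup>2 * (c * 2 ^ ?n * ?S)"
    using measure_Sset_shells_le[OF compact_\<Omega> convex_\<Omega> assms]
    unfolding A_def A'_def c_def by (intro add_mono mult_left_mono) simp_all
  also have "\<dots> = pu\<^sup>2 * c * (1 + 2 ^ ?n) * ?S"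
    by (simp add: algebra_simps)
  also have "\<dots> \<le> pu\<^sup>2 * c * (1 + 2 ^ ?n) * (mass t z / pl\<^sup>2)"
  proof (rule mult_left_mono)
    show "?S \<le> mass t z / pl\<^sup>2"
      using mass_ge_measure[of t z] pl_pos by (simp add: field_simps)
    show "0 \<le> pu\<^sup>2 * c * (1 + 2 ^ ?n)"
      using assms(2-4) by (simp add: c_def)
  qed
  finally show "integral UNIV (weight_diff_bound e t s z) \<le> (3 * e
      + (pu\<^sup>2 / pl\<^sup>2) * ?n * (1 + 2 ^ ?n) * (s - t) / min t (1 - t)) * mass t z"
    using integral_unique[OF integral] pl_pos by (simp add: c_def field_simps)
qed

lemma mass_moment_diff_le:
  assumes lip: "\<And>\<eta>. \<eta> > 0 \<Longrightarrow> omega p0 p1 \<Omega> \<eta> \<le> L * \<eta>" and "0 \<le> L"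
    and "z \<in> \<Omega>" "0 < t" "t < s" "s < 1" "s - t \<le> (1 - t) / 2"
    and "L * (s - t) * diameter \<Omega> \<le> 1"
  defines "K \<equiv> 3 * (L * (s - t) * diameter \<Omega>)
    + (pu\<^sup>2 / pl\<^sup>2) * DIM('a) * (1 + 2 ^ DIM('a)) * (s - t) / min t (1 - t)"
  shows "\<bar>mass t z - mass s z\<bar> \<le> K * mass t z"
    and "norm (moment t z - moment s z) \<le> diameter \<Omega> * (K * mass t z)"
proof -
  let ?B = "weight_diff_bound (L * (s - t) * diameter \<Omega>) t s z"
  note bound = weight_diff_bound_integral_le[OF assms(3-7), of "L * (s - t) * diameter \<Omega>", folded K_def]
  have support: "norm \<delta> \<le> diameter \<Omega>" if "weight t z \<delta> \<noteq> weight s z \<delta>" for \<delta>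
    using that weight_eq_0 norm_le_diameter_if_mem_Sset[OF bounded_\<Omega>] by metis
  note diff_le = abs_integral_diff_le norm_moment_diff_le
  note diff_le = diff_le[OF weight_integrable weight_moment_integrable weight_integrable
      weight_moment_integrable bound(1) weight_diff_le[OF lip assms(2-6,8)] support
      diameter_ge_0[OF bounded_\<Omega>]]
  show "\<bar>mass t z - mass s z\<bar> \<le> K * mass t z"
    using diff_le(1) bound(2) unfolding mass_def by linarith
  show "norm (moment t z - moment s z) \<le> diameter \<Omega> * (K * mass t z)"
    using diff_le(2) mult_left_mono[OF bound(2) diameter_ge_0[OF bounded_\<Omega>]]
    unfolding moment_def by linarith
qed

lemma norm_vel_diff_le_short_step:
  assumes lip: "\<And>\<eta>. \<eta> > 0 \<Longrightarrow> omega p0 p1 \<Omega> \<eta> \<le> L * \<eta>" and "0 \<le> L"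
    and "0 < \<epsilon>" "cball z \<epsilon> \<subseteq> \<Omega>" "0 < t" "t < s" "s < 1" "s - t \<le> (1 - t) / 2"
    and "L * (s - t) * diameter \<Omega> \<le> 1"
  shows "norm (vel p0 p1 \<Omega> t z - vel p0 p1 \<Omega> s z) \<le> 2 * diameter \<Omega> * (3 * L * diameter \<Omega>
    + (pu\<^sup>2 / pl\<^sup>2) * DIM('a) * (1 + 2 ^ DIM('a)) / min t (1 - t)) * (s - t)"
proof -
  define K where "K = 3 * (L * (s - t) * diameter \<Omega>)
    + (pu\<^sup>2 / pl\<^sup>2) * DIM('a) * (1 + 2 ^ DIM('a)) * (s - t) / min t (1 - t)"
  have "z \<in> \<Omega>"
    using assms(3,4) by auto
  note diff = mass_moment_diff_le[OF lip assms(2) \<open>z \<in> \<Omega>\<close> assms(5-9), folded K_def]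
  have "0 < mass t z" "0 < mass s z"
    using assms(3-7) by (auto intro!: mass_pos)
  then have "norm (vel p0 p1 \<Omega> t z - vel p0 p1 \<Omega> s z) \<le> 2 * diameter \<Omega> * (K * mass t z) / mass t z"
    using norm_scaleR_inverse_diff_le[OF _ _ diff norm_moment_le] assms(5-7)
    by (simp add: vel_eq_moment_over_mass)
  also have "\<dots> = 2 * diameter \<Omega> * K"
    using \<open>0 < mass t z\<close> by simp
  finally show ?thesis
    by (simp add: K_def algebra_simps add_divide_distrib)
qed

lemma two_le_density_ratio_constant:
  assumes "z \<in> \<Omega>"
  shows "2 \<le> (pu\<^sup>2 / pl\<^sup>2) * DIM('a) * (1 + 2 ^ DIM('a))"
proof -
  have "pl \<le> pu"
    using assms p0_bounds by force
  then have "1 \<le> pu\<^sup>2 / pl\<^sup>2"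
    using pl_pos by (simp add: power_mono)
  moreover have "1 * 2 \<le> real DIM('a) * (1 + 2 ^ DIM('a))"
    using DIM_positive[where 'a='a] by (intro mult_mono) auto
  ultimately have "1 * 2 \<le> (pu\<^sup>2 / pl\<^sup>2) * (real DIM('a) * (1 + 2 ^ DIM('a)))"
    by (intro mult_mono) auto
  then show ?thesis
    by (simp add: mult.assoc)
qed

lemma norm_vel_diff_le_long_step:
  assumes "(p0 has_integral 1) UNIV" "0 \<le> L" "z \<in> \<Omega>" "0 < t" "t < 1" "0 < h" "t + h \<le> 1"
    and long: "(1 - t) / 2 < h \<or> 1 < L * h * diameter \<Omega>"
  shows "norm (vel p0 p1 \<Omega> t z - vel p0 p1 \<Omega> (t + h) z) \<le> 2 * diameter \<Omega> * (3 * L * diameter \<Omega>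
    + (pu\<^sup>2 / pl\<^sup>2) * DIM('a) * (1 + 2 ^ DIM('a)) / min t (1 - t)) * h"
proof -
  let ?C = "(pu\<^sup>2 / pl\<^sup>2) * DIM('a) * (1 + 2 ^ DIM('a))"
  note C = two_le_density_ratio_constant[OF assms(3)]
  have split: "(3 * L * diameter \<Omega> + ?C / min t (1 - t)) * h
      = 3 * L * diameter \<Omega> * h + ?C * h / min t (1 - t)"
    by (simp add: distrib_right)
  have nonneg: "0 \<le> 3 * L * diameter \<Omega> * h" "0 \<le> ?C * h / min t (1 - t)"
    using C assms(2,4-6) diameter_ge_0[OF bounded_\<Omega>] by simp_all
  from long have large: "1 \<le> (3 * L * diameter \<Omega> + ?C / min t (1 - t)) * h"
  proof
    assume "(1 - t) / 2 < h"
    then have "1 \<le> 2 * h / min t (1 - t)"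
      using assms(4,5) by (simp add: field_simps)
    also have "\<dots> \<le> ?C * h / min t (1 - t)"
      using C assms(4-6) by (intro divide_right_mono mult_right_mono) auto
    finally show ?thesis
      unfolding split using nonneg by linarith
  next
    assume "1 < L * h * diameter \<Omega>"
    then show ?thesis
      unfolding split using nonneg by (simp add: algebra_simps)
  qed
  have "norm (vel p0 p1 \<Omega> t z - vel p0 p1 \<Omega> (t + h) z)
      \<le> norm (vel p0 p1 \<Omega> t z) + norm (vel p0 p1 \<Omega> (t + h) z)"
    by (rule norm_triangle_ineq4)
  also have "\<dots> \<le> 2 * diameter \<Omega>"
    using norm_vel_le_diameter[OF assms(1,3), of t] norm_vel_le_diameter[OF assms(1,3), of "t + h"]
      assms(4-7) by simp
  also have "\<dots> \<le> 2 * diameter \<Omega> * ((3 * L * diameter \<Omega> + ?C / min t (1 - t)) * h)"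
    using mult_left_mono[OF large, of "2 * diameter \<Omega>"] diameter_ge_0[OF bounded_\<Omega>] by simp
  finally show ?thesis
    by (simp add: mult.assoc)
qed

lemma norm_vel_diff_le:
  assumes "(p0 has_integral 1) UNIV"
    and lip: "\<And>\<eta>. \<eta> > 0 \<Longrightarrow> omega p0 p1 \<Omega> \<eta> \<le> L * \<eta>" and "0 \<le> L"
    and "0 < \<epsilon>" "cball z \<epsilon> \<subseteq> \<Omega>" "0 < t" "t < 1" "0 < h" "t + h \<le> 1"
  shows "norm (vel p0 p1 \<Omega> t z - vel p0 p1 \<Omega> (t + h) z) \<le> 2 * diameter \<Omega> * (3 * L * diameter \<Omega>
    + (pu\<^sup>2 / pl\<^sup>2) * DIM('a) * (1 + 2 ^ DIM('a)) / min t (1 - t)) * h"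
proof (cases "h \<le> (1 - t) / 2 \<and> L * h * diameter \<Omega> \<le> 1")
  case True
  then show ?thesis
    using norm_vel_diff_le_short_step[OF lip assms(3-6), of "t + h"] assms(7,8) by simp
next
  case False
  moreover have "z \<in> \<Omega>"
    using assms(4,5) by auto
  ultimately show ?thesis
    using norm_vel_diff_le_long_step[OF assms(1,3) _ assms(6-9)] by fastforce
qed

end

lemma constant_le_radius_constant:
  fixes X D \<epsilon> \<tau> :: real
  assumes "0 \<le> X" "0 < \<epsilon>" "\<epsilon> \<le> D" "0 < \<tau>"
  shows "X * n * (1 + 2 ^ n) / \<tau> \<le> X * (4 ^ (n + 1) * real n * D ^ 2) / (\<epsilon> ^ 2 * \<tau>)"
proof -
  have "4 ^ (n + 1) * 1 \<le> 4 ^ (n + 1) * (D ^ 2 / \<epsilon> ^ 2)"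
    using assms(2,3) by (intro mult_left_mono) (simp_all add: power_mono)
  moreover have "(2::real) ^ n \<le> 4 ^ n" "(1::real) \<le> 4 ^ n"
    by (simp_all add: power_mono)
  ultimately have "1 + 2 ^ n \<le> 4 ^ (n + 1) * (D ^ 2 / \<epsilon> ^ 2)"
    by (simp only: power_add power_one_right mult_1_right)
  then have "X * n * (1 + 2 ^ n) / \<tau> \<le> X * n * (4 ^ (n + 1) * (D ^ 2 / \<epsilon> ^ 2)) / \<tau>"
    using assms(1,4) by (intro divide_right_mono mult_left_mono) simp_all
  also have "\<dots> = X * (4 ^ (n + 1) * real n * D ^ 2) / (\<epsilon> ^ 2 * \<tau>)"
    by (simp add: field_simps)
  finally show ?thesis .
qed

theorem proposition4:
  fixes \<Omega> :: "'a::euclidean_space set"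
    and p0 p1 :: "'a \<Rightarrow> real"
    and pl pu L \<epsilon> t h :: real
  assumes "compact \<Omega>" and "convex \<Omega>" and "interior \<Omega> \<noteq> {}"
    and "\<And>x. x \<notin> \<Omega> \<Longrightarrow> p0 x = 0" and "\<And>x. x \<notin> \<Omega> \<Longrightarrow> p1 x = 0"
    and "(p0 has_integral 1) UNIV" and "(p1 has_integral 1) UNIV"
    and "continuous_on \<Omega> p0" and "continuous_on \<Omega> p1"
    and "0 < pl"
    and "\<And>x. x \<in> \<Omega> \<Longrightarrow> pl \<le> p0 x \<and> p0 x \<le> pu"
    and "\<And>x. x \<in> \<Omega> \<Longrightarrow> pl \<le> p1 x \<and> p1 x \<le> pu"
    and "0 \<le> L" and "\<And>\<eta>. \<eta> > 0 \<Longrightarrow> omega p0 p1 \<Omega> \<eta> \<le> L * \<eta>"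
    and "0 < \<epsilon>"
    and "0 \<le> t" and "t \<le> 1" and "0 < h" and "t + h \<le> 1"
  shows "\<forall>z \<in> inner_set \<Omega> \<epsilon>. min t (1 - t) > 0 \<longrightarrow>
           norm (vel p0 p1 \<Omega> t z - vel p0 p1 \<Omega> (t + h) z)
             \<le> 2 * diameter \<Omega> * (8 * L * diameter \<Omega>
                 + (pu ^ 2 / pl ^ 2) * (4 ^ (DIM('a) + 1) * real DIM('a) * diameter \<Omega> ^ 2)
                   / (\<epsilon> ^ 2 * min t (1 - t))) * h"
proof (intro ballI impI)
  fix z
  assume "z \<in> inner_set \<Omega> \<epsilon>" and "min t (1 - t) > 0"
  interpret bounded_densities \<Omega> p0 p1 pl pu
    by unfold_locales (use assms in auto)
  let ?n = "DIM('a)" and ?D = "diameter \<Omega>" and ?X = "pu ^ 2 / pl ^ 2"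
  have ball: "cball z \<epsilon> \<subseteq> \<Omega>"
    using \<open>z \<in> inner_set \<Omega> \<epsilon>\<close> by (simp add: inner_set_def)
  then have "\<epsilon> \<le> ?D"
    using diameter_subset[OF ball bounded_\<Omega>] assms(15) by simp
  have "norm (vel p0 p1 \<Omega> t z - vel p0 p1 \<Omega> (t + h) z)
      \<le> 2 * ?D * (3 * L * ?D + ?X * ?n * (1 + 2 ^ ?n) / min t (1 - t)) * h"
    using norm_vel_diff_le[OF assms(6,14,13,15) ball] \<open>min t (1 - t) > 0\<close> assms(18,19) by simp
  also have "\<dots> \<le> 2 * ?D * (8 * L * ?D + ?X * (4 ^ (?n + 1) * real ?n * ?D ^ 2) / (\<epsilon> ^ 2 * min t (1 - t))) * h"
    using constant_le_radius_constant[OF _ assms(15) \<open>\<epsilon> \<le> ?D\<close> \<open>min t (1 - t) > 0\<close>, of ?X ?n]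
      assms(13,18) diameter_ge_0[OF bounded_\<Omega>]
    by (intro mult_right_mono mult_left_mono add_mono) auto
  finally show "norm (vel p0 p1 \<Omega> t z - vel p0 p1 \<Omega> (t + h) z)
      \<le> 2 * diameter \<Omega> * (8 * L * diameter \<Omega>
          + (pu ^ 2 / pl ^ 2) * (4 ^ (DIM('a) + 1) * real DIM('a) * diameter \<Omega> ^ 2)
            / (\<epsilon> ^ 2 * min t (1 - t))) * h" .
qed

end
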